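(* Let $d\ge2$, $(k,\sigma)\in\Xi^d$, and let $T$ be a compact operator on $\ell^2(\mathbb{Z}^d)$. Let $(k_n,\sigma_n)_{n\in\mathbb{N}}$ be a sequence in $\Xi^d$ converging to $(k,\sigma)$. If $f\in\ell^1(\mathbb{Z}^d)$, then $\big(\pi_{k_n,\sigma_n}(\upsilon_{k_n}(f))T\big)_{n\in\mathbb{N}}$ converges in operator norm to $\pi_{k,\sigma}(\upsilon_k(f))T$.
   Context: $\mathbb{N}_\ast=\{2,3,\ldots\}$, $\overline{\mathbb{N}}_\ast=\mathbb{N}_\ast\cup\{\infty\}$. For $k\in\overline{\mathbb{N}}_\ast^d$: $k\mathbb{Z}^d=\prod_jk_j\mathbb{Z}$ with $\infty\mathbb{Z}=\{0\}$, $\mathbb{Z}^d_k=\mathbb{Z}^d/k\mathbb{Z}^d$, $q_k$ the canonical surjection. A skew-bicharacter of $\mathbb{Z}^d_k$ is a bicharacter $\sigma$ into the unit circle with $\sigma(n,m)=\overline{\sigma(m,n)}$, identified with its lift to $\mathbb{Z}^d$. $\Xi^d$ is the set of pairs $(k,\sigma)$ with $\sigma$ a skew-bicharacter of $\mathbb{Z}^d_k$, topologized as a subspace of $\overline{\mathbb{N}}_\ast^d\times\{\text{skew-bicharacters of }\mathbb{Z}^d\}$ (product topology, pointwise convergence in the second factor). On $\ell^2(\mathbb{Z}^d_k)$ let $U^n_{k,\sigma}e_m=\sigma(m,n)e_{m-n}$, $\rho_{k,\sigma}(g)=\sum_ng(n)U^n_{k,\sigma}$, $C^\ast(\mathbb{Z}^d_k,\sigma)$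 the norm closure. $I_k=\prod_j\{\lfloor\frac{1-k_j}{2}\rfloor,\ldots,\lfloor\frac{k_j-1}{2}\rfloor\}$ (factor $\mathbb{Z}$ if $k_j=\infty$). $\pi_{k,\sigma}$ is the representation of $C^\ast(\mathbb{Z}^d_k,\sigma)$ on $\ell^2(\mathbb{Z}^d)$ which, for each $n\in k\mathbb{Z}^d$, leaves $H_n=\overline{\mathrm{span}}\{e_j:j\in I_k+n\}$ invariant and acts there as $W_n\rho_{k,\sigma}(\cdot)W_n^\ast$, with $W_n e_{q_k(j)}=e_{j+n}$ for $j\in I_k$. $\upsilon_k:\ell^1(\mathbb{Z}^d)\to\ell^1(\mathbb{Z}^d_k)$, $\upsilon_k(f)(q_k(n))=\sum_{m\in k\mathbb{Z}^d}f(m+n)$. *)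

theory Defs
  imports "HOL-Analysis.Analysis" "HOL-Library.Extended_Nat"
begin

text \<open>Points of Z^d are vectors int^'d (d = CARD('d)); k in (N_* u {oo})^d is enat^'d.
  Functions on Z^d_k are represented as k-periodic functions on Z^d (lifts).\<close>

type_synonym 'd pt = "int ^ ('d::finite)"

definition in_lat :: "enat ^ ('d::finite) \<Rightarrow> int ^ 'd \<Rightarrow> bool" where
  "in_lat k m \<longleftrightarrow> (\<forall>j. case k $ j of enat c \<Rightarrow> int c dvd m $ j | \<infinity> \<Rightarrow> m $ j = 0)"

text \<open>Skew-bicharacter of Z^d_k, identified with its lift to Z^d.\<close>
definition skew_bichar :: "enat ^ ('d::finite) \<Rightarrow> (('d::finite) pt \<Rightarrow> ('d::finite) pt \<Rightarrow> complex) \<Rightarrow> bool" where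
  "skew_bichar k \<sigma> \<longleftrightarrow>
     (\<forall>n m. cmod (\<sigma> n m) = 1) \<and>
     (\<forall>n n' m. \<sigma> (n + n') m = \<sigma> n m * \<sigma> n' m) \<and>
     (\<forall>n m m'. \<sigma> n (m + m') = \<sigma> n m * \<sigma> n m') \<and>
     (\<forall>n m. \<sigma> n m = cnj (\<sigma> m n)) \<and>
     (\<forall>n n' m. in_lat k (n - n') \<longrightarrow> \<sigma> n m = \<sigma> n' m \<and> \<sigma> m n = \<sigma> m n')"

definition in_Xi :: "enat ^ ('d::finite) \<Rightarrow> (('d::finite) pt \<Rightarrow> ('d::finite) pt \<Rightarrow> complex) \<Rightarrow> bool" where
  "in_Xi k \<sigma> \<longleftrightarrow> (\<forall>j. k $ j \<ge> 2) \<and> skew_bichar k \<sigma>"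

text \<open>Convergence in the one-point compactification of the discrete N_* (i.e. N_* u {oo}).\<close>
definition enat_conv :: "(nat \<Rightarrow> enat) \<Rightarrow> enat \<Rightarrow> bool" where
  "enat_conv a c \<longleftrightarrow>
     (case c of enat m \<Rightarrow> eventually (\<lambda>n. a n = enat m) sequentially
              | \<infinity> \<Rightarrow> (\<forall>N::nat. eventually (\<lambda>n. a n \<ge> enat N) sequentially))"

definition Xi_conv :: "(nat \<Rightarrow> enat ^ ('d::finite)) \<Rightarrow> (nat \<Rightarrow> ('d::finite) pt \<Rightarrow> ('d::finite) pt \<Rightarrow> complex)
    \<Rightarrow> enat ^ ('d::finite) \<Rightarrow> (('d::finite) pt \<Rightarrow> ('d::finite) pt \<Rightarrow> complex) \<Rightarrow> bool" where
  "Xi_conv ks \<sigma>s k \<sigma> \<longleftrightarrow>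
     (\<forall>j. enat_conv (\<lambda>n. ks n $ j) (k $ j)) \<and>
     (\<forall>a b. (\<lambda>n. \<sigma>s n a b) \<longlonglongrightarrow> \<sigma> a b)"

definition I_set :: "enat ^ ('d::finite) \<Rightarrow> ('d::finite) pt set" where
  "I_set k = {m. \<forall>j. case k $ j of
       enat c \<Rightarrow> \<lfloor>(1 - real c) / 2\<rfloor> \<le> m $ j \<and> m $ j \<le> \<lfloor>(real c - 1) / 2\<rfloor>
     | \<infinity> \<Rightarrow> True}"

definition rep :: "enat ^ ('d::finite) \<Rightarrow> ('d::finite) pt \<Rightarrow> ('d::finite) pt" where
  "rep k n = (\<chi> j. case k $ j of
       enat c \<Rightarrow> \<lfloor>(1 - real c) / 2\<rfloor> + (n $ j - \<lfloor>(1 - real c) / 2\<rfloor>) mod int c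
     | \<infinity> \<Rightarrow> n $ j)"

definition ell1 :: "(('d::finite) pt \<Rightarrow> complex) \<Rightarrow> bool" where
  "ell1 f \<longleftrightarrow> (\<lambda>n. cmod (f n)) summable_on UNIV"

definition ell2 :: "(('d::finite) pt \<Rightarrow> complex) \<Rightarrow> bool" where
  "ell2 x \<longleftrightarrow> (\<lambda>i. (cmod (x i))\<^sup>2) summable_on UNIV"

definition l2norm :: "(('d::finite) pt \<Rightarrow> complex) \<Rightarrow> real" where
  "l2norm x = sqrt (\<Sum>\<^sub>\<infinity>i. (cmod (x i))\<^sup>2)"

definition opnorm :: "((('d::finite) pt \<Rightarrow> complex) \<Rightarrow> (('d::finite) pt \<Rightarrow> complex)) \<Rightarrow> real" where
  "opnorm A = Sup {l2norm (A x) | x. ell2 x \<and> l2norm x \<le> 1}"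

text \<open>Compact operator on l^2(Z^d): linear on l^2, maps l^2 into l^2, and the image of
  the closed unit ball is relatively compact (= totally bounded, l^2 being complete).\<close>
definition compact_op :: "((('d::finite) pt \<Rightarrow> complex) \<Rightarrow> (('d::finite) pt \<Rightarrow> complex)) \<Rightarrow> bool" where
  "compact_op T \<longleftrightarrow>
     (\<forall>x. ell2 x \<longrightarrow> ell2 (T x)) \<and>
     (\<forall>x y. ell2 x \<longrightarrow> ell2 y \<longrightarrow> T (\<lambda>i. x i + y i) = (\<lambda>i. T x i + T y i)) \<and>
     (\<forall>c x. ell2 x \<longrightarrow> T (\<lambda>i. c * x i) = (\<lambda>i. c * T x i)) \<and>
     (\<forall>e>0. \<exists>F. finite F \<and> (\<forall>z\<in>F. ell2 z) \<and>
        (\<forall>x. ell2 x \<and> l2norm x \<le> 1 \<longrightarrow> (\<exists>z\<in>F. l2norm (\<lambda>i. T x i - z i) < e)))"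

text \<open>upsilon_k : l^1(Z^d) -> l^1(Z^d_k), result as a k-periodic function on Z^d.\<close>
definition upsilon :: "enat ^ ('d::finite) \<Rightarrow> (('d::finite) pt \<Rightarrow> complex) \<Rightarrow> ('d::finite) pt \<Rightarrow> complex" where
  "upsilon k f n = (\<Sum>\<^sub>\<infinity>m\<in>{m. in_lat k m}. f (m + n))"

text \<open>U^n_{k,sigma} e_m = sigma(m,n) e_{m-n}, acting on k-periodic functions
  (vectors of l^2(Z^d_k)): (U^n x)(m) = sigma(m+n,n) x(m+n).\<close>
definition Uop :: "(('d::finite) pt \<Rightarrow> ('d::finite) pt \<Rightarrow> complex) \<Rightarrow> ('d::finite) pt \<Rightarrow> (('d::finite) pt \<Rightarrow> complex) \<Rightarrow> ('d::finite) pt \<Rightarrow> complex" where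
  "Uop \<sigma> n x m = \<sigma> (m + n) n * x (m + n)"

text \<open>rho_{k,sigma}(g) = sum over n in Z^d_k of g(n) U^n (n ranging over representatives I_k).\<close>
definition rho :: "enat ^ ('d::finite) \<Rightarrow> (('d::finite) pt \<Rightarrow> ('d::finite) pt \<Rightarrow> complex) \<Rightarrow> (('d::finite) pt \<Rightarrow> complex)
    \<Rightarrow> (('d::finite) pt \<Rightarrow> complex) \<Rightarrow> ('d::finite) pt \<Rightarrow> complex" where
  "rho k \<sigma> g x m = (\<Sum>\<^sub>\<infinity>n\<in>I_set k. g n * Uop \<sigma> n x m)"

text \<open>pi_{k,sigma}(A): on H_p (p in k Z^d) acts as W_p A W_p^*, where W_p e_{q_k(j)} = e_{j+p},
  j in I_k.  For i = j + p (j = rep k i): (W_p^* y)(m) = y(rep k m + p).\<close>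
definition pi_rep :: "enat ^ ('d::finite) \<Rightarrow> ((('d::finite) pt \<Rightarrow> complex) \<Rightarrow> (('d::finite) pt \<Rightarrow> complex))
    \<Rightarrow> (('d::finite) pt \<Rightarrow> complex) \<Rightarrow> ('d::finite) pt \<Rightarrow> complex" where
  "pi_rep k A y i = (let p = i - rep k i in A (\<lambda>m. y (rep k m + p)) (rep k i))"

end

(*
  For y in l^2(Z^d) the operator pi_{k,sigma}(upsilon_k f) acts by
    (pi_{k,sigma}(upsilon_k f) y)(i) = sum_m f(m) sigma(tau_k(i,m), m) y(tau_k(i,m)),
  where tau_k(i,m) is the point congruent to i + m modulo k Z^d in the translate of I_k that
  contains i.  It is therefore an l^1-combination of unitary weighted permutations S_m, and
  Cauchy-Schwarz with the weights |f(m)| bounds the difference E_n between the n-th and the limit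
  operator by 2 |f|_1, uniformly in n.  For fixed i and m, tau_{k_n}(i,m) = tau_k(i,m) eventually
  and sigma_n -> sigma pointwise, so S_m^(n) -> S_m strongly; dominated convergence in m gives
  E_n -> 0 strongly.  Finally a uniformly bounded, strongly null sequence is uniformly small on the
  totally bounded set T(unit ball), i.e. E_n T -> 0 in norm.
*)

theory Submission
  imports Defs
begin

section \<open>Square-summable functions on an arbitrary index set\<close>

definition sqnorm :: "('a \<Rightarrow> complex) \<Rightarrow> real" where
  "sqnorm y = (\<Sum>\<^sub>\<infinity>i. (cmod (y i))\<^sup>2)"

lemma sqnorm_nonneg: "sqnorm y \<ge> 0"
  by (simp add: sqnorm_def infsum_nonneg)

lemma sq_cmod_diff_le: "(cmod (a - b))\<^sup>2 \<le> 2 * (cmod a)\<^sup>2 + 2 * (cmod b)\<^sup>2"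
proof -
  have "(cmod (a - b))\<^sup>2 \<le> (cmod a + cmod b)\<^sup>2"
    by (intro power_mono norm_triangle_ineq4) auto
  also have "\<dots> \<le> 2 * (cmod a)\<^sup>2 + 2 * (cmod b)\<^sup>2"
    by (smt (verit, best) power2_sum sum_squares_bound)
  finally show ?thesis .
qed

lemma sqnorm_diff_le:
  fixes u z :: "'a \<Rightarrow> complex"
  assumes u: "(\<lambda>i. (cmod (u i))\<^sup>2) summable_on UNIV" and z: "(\<lambda>i. (cmod (z i))\<^sup>2) summable_on UNIV"
  shows "(\<lambda>i. (cmod (u i - z i))\<^sup>2) summable_on UNIV"
    and "sqnorm (\<lambda>i. u i - z i) \<le> 2 * sqnorm u + 2 * sqnorm z"
proof -
  have bound: "(\<lambda>i. 2 * (cmod (u i))\<^sup>2 + 2 * (cmod (z i))\<^sup>2) summable_on UNIV"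
    by (intro summable_on_add summable_on_cmult_right u z)
  show summable: "(\<lambda>i. (cmod (u i - z i))\<^sup>2) summable_on UNIV"
    by (rule summable_on_comparison_test[OF bound sq_cmod_diff_le]) simp
  have "sqnorm (\<lambda>i. u i - z i) \<le> (\<Sum>\<^sub>\<infinity>i. 2 * (cmod (u i))\<^sup>2 + 2 * (cmod (z i))\<^sup>2)"
    unfolding sqnorm_def by (rule infsum_mono[OF summable bound sq_cmod_diff_le])
  also have "\<dots> = 2 * sqnorm u + 2 * sqnorm z"
    using u z by (simp add: sqnorm_def infsum_add infsum_cmult_right' summable_on_cmult_right)
  finally show "sqnorm (\<lambda>i. u i - z i) \<le> 2 * sqnorm u + 2 * sqnorm z" .
qed

lemma cmod_le_sqrt_sqnorm:
  assumes "(\<lambda>i. (cmod (y i))\<^sup>2) summable_on UNIV"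
  shows "cmod (y j) \<le> sqrt (sqnorm y)"
proof -
  have "(\<Sum>i\<in>{j}. (cmod (y i))\<^sup>2) \<le> sqnorm y"
    unfolding sqnorm_def using assms by (intro finite_sum_le_infsum) auto
  then have "sqrt ((cmod (y j))\<^sup>2) \<le> sqrt (sqnorm y)"
    by (intro real_sqrt_le_mono) simp
  then show ?thesis by simp
qed

lemma weighted_infsum_square_le:
  fixes c w :: "'a \<Rightarrow> real"
  assumes c0: "\<And>m. c m \<ge> 0" and cs: "c summable_on UNIV"
    and w0: "\<And>m. w m \<ge> 0" and qs: "(\<lambda>m. c m * (w m)\<^sup>2) summable_on UNIV"
  shows "(\<lambda>m. c m * w m) summable_on UNIV"
    and "(\<Sum>\<^sub>\<infinity>m. c m * w m)\<^sup>2 \<le> (\<Sum>\<^sub>\<infinity>m. c m) * (\<Sum>\<^sub>\<infinity>m. c m * (w m)\<^sup>2)"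
proof -
  have "c m * w m \<le> c m + c m * (w m)\<^sup>2" for m
  proof -
    have "w m \<le> 1 + (w m)\<^sup>2"
      by (smt (verit) power2_eq_square mult_le_cancel_left1 w0 zero_le_power2)
    then show ?thesis using c0 by (metis distrib_left mult.right_neutral mult_left_mono)
  qed
  then show sw: "(\<lambda>m. c m * w m) summable_on UNIV"
    by (intro summable_on_comparison_test[OF summable_on_add[OF cs qs]]) (use c0 w0 in auto)
  define C where "C = (\<Sum>\<^sub>\<infinity>m. c m)"
  define S where "S = (\<Sum>\<^sub>\<infinity>m. c m * w m)"
  define Q where "Q = (\<Sum>\<^sub>\<infinity>m. c m * (w m)\<^sup>2)"
  have quadratic: "0 \<le> Q + ((- 2 * t) * S + t\<^sup>2 * C)" for t
  proof -
    have "((\<lambda>m. c m * (w m)\<^sup>2 + ((- 2 * t) * (c m * w m) + t\<^sup>2 * c m)) has_sum Q + ((- 2 * t) * S + t\<^sup>2 * C)) UNIV"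
      unfolding Q_def S_def C_def
      by (intro has_sum_add has_sum_cmult_right has_sum_infsum qs sw cs)
    moreover have "c m * (w m)\<^sup>2 + ((- 2 * t) * (c m * w m) + t\<^sup>2 * c m) = c m * (w m - t)\<^sup>2" for m
      by (simp add: power2_eq_square algebra_simps)
    ultimately have "((\<lambda>m. c m * (w m - t)\<^sup>2) has_sum Q + ((- 2 * t) * S + t\<^sup>2 * C)) UNIV"
      by simp
    then show ?thesis
      by (rule has_sum_nonneg) (use c0 in auto)
  qed
  show "S\<^sup>2 \<le> C * Q"
  proof (cases "C = 0")
    case True
    then have "c m = 0" for m
      using nonneg_infsum_le_0D[of c UNIV m] cs c0 C_def by auto
    then show ?thesis by (simp add: S_def True)
  next
    case False
    then have "C > 0"
      using infsum_nonneg[of UNIV c] c0 C_def by fastforce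
    with quadratic[of "S / C"] show ?thesis
      by (simp add: power2_eq_square field_simps)
  qed
qed

lemma cmod_infsum_square_le:
  fixes f w :: "'b \<Rightarrow> complex"
  assumes f: "(\<lambda>m. cmod (f m)) summable_on UNIV"
    and w: "(\<lambda>m. cmod (f m) * (cmod (w m))\<^sup>2) summable_on UNIV"
  shows "(\<lambda>m. f m * w m) summable_on UNIV"
    and "(cmod (\<Sum>\<^sub>\<infinity>m. f m * w m))\<^sup>2 \<le> (\<Sum>\<^sub>\<infinity>m. cmod (f m)) * (\<Sum>\<^sub>\<infinity>m. cmod (f m) * (cmod (w m))\<^sup>2)"
proof -
  note cs = weighted_infsum_square_le[where c = "\<lambda>m. cmod (f m)" and w = "\<lambda>m. cmod (w m)",
      OF norm_ge_zero f norm_ge_zero w]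
  show summable: "(\<lambda>m. f m * w m) summable_on UNIV"
    by (rule abs_summable_summable, rule summable_on_comparison_test[OF cs(1)]) (auto simp: norm_mult)
  have "cmod (\<Sum>\<^sub>\<infinity>m. f m * w m) \<le> (\<Sum>\<^sub>\<infinity>m. cmod (f m) * cmod (w m))"
    by (intro norm_infsum_le[OF has_sum_infsum[OF summable] has_sum_infsum[OF cs(1)]])
       (simp add: norm_mult)
  then have "(cmod (\<Sum>\<^sub>\<infinity>m. f m * w m))\<^sup>2 \<le> (\<Sum>\<^sub>\<infinity>m. cmod (f m) * cmod (w m))\<^sup>2"
    by (intro power_mono) auto
  with cs(2) show "(cmod (\<Sum>\<^sub>\<infinity>m. f m * w m))\<^sup>2 \<le> (\<Sum>\<^sub>\<infinity>m. cmod (f m)) * (\<Sum>\<^sub>\<infinity>m. cmod (f m) * (cmod (w m))\<^sup>2)"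
    by linarith
qed

lemma sqnorm_combination_le:
  fixes f :: "'b \<Rightarrow> complex" and y :: "'b \<Rightarrow> 'a \<Rightarrow> complex"
  assumes f: "(\<lambda>m. cmod (f m)) summable_on UNIV"
    and bounded: "\<And>m i. cmod (y m i) \<le> B"
    and rows: "\<And>m. (\<lambda>i. (cmod (y m i))\<^sup>2) summable_on UNIV"
    and rows_le: "\<And>m. sqnorm (y m) \<le> M"
  shows "(\<lambda>i. (cmod (\<Sum>\<^sub>\<infinity>m. f m * y m i))\<^sup>2) summable_on UNIV"
    and "sqnorm (\<lambda>i. \<Sum>\<^sub>\<infinity>m. f m * y m i) \<le> (\<Sum>\<^sub>\<infinity>m. cmod (f m)) * (\<Sum>\<^sub>\<infinity>m. cmod (f m) * sqnorm (y m))"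
proof -
  define C where "C = (\<Sum>\<^sub>\<infinity>m. cmod (f m))"
  define h where "h m i = cmod (f m) * (cmod (y m i))\<^sup>2" for m i
  have column: "(\<lambda>m. h m i) summable_on UNIV" for i
  proof (rule summable_on_comparison_test[OF summable_on_cmult_left[OF f, of "B\<^sup>2"]])
    show "h m i \<le> cmod (f m) * B\<^sup>2" for m
      using bounded[of m i] by (simp add: h_def mult_left_mono power_mono)
  qed (simp add: h_def)
  have "(\<lambda>(m, i). h m i) summable_on UNIV \<times> UNIV"
  proof (rule summable_on_SigmaI[where g = "\<lambda>m. cmod (f m) * sqnorm (y m)"])
    show "((\<lambda>i. (\<lambda>(m, i). h m i) (m, i)) has_sum cmod (f m) * sqnorm (y m)) UNIV" for m
      unfolding h_def sqnorm_def by (simp, intro has_sum_cmult_right has_sum_infsum rows)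
    show "(\<lambda>m. cmod (f m) * sqnorm (y m)) summable_on UNIV"
      by (rule summable_on_comparison_test[OF summable_on_cmult_left[OF f, of M]])
         (simp_all add: rows_le mult_left_mono sqnorm_nonneg)
  qed (auto simp: h_def)
  then have h_summable: "(\<lambda>(i, m). h m i) summable_on UNIV \<times> UNIV"
    by (subst summable_on_swap) (simp add: case_prod_unfold)
  define G where "G i = (\<Sum>\<^sub>\<infinity>m. h m i)" for i
  have G_summable: "G summable_on UNIV"
    unfolding G_def using summable_on_Sigma_banach[OF h_summable] by simp
  have G_sum: "infsum G UNIV = (\<Sum>\<^sub>\<infinity>m. cmod (f m) * sqnorm (y m))"
    unfolding G_def using infsum_swap_banach[OF h_summable]
    by (simp add: h_def sqnorm_def infsum_cmult_right')
  have pointwise: "(cmod (\<Sum>\<^sub>\<infinity>m. f m * y m i))\<^sup>2 \<le> C * G i" for i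
    using cmod_infsum_square_le(2)[OF f column[unfolded h_def]] by (simp add: C_def G_def h_def)
  have bound_summable: "(\<lambda>i. C * G i) summable_on UNIV"
    by (intro summable_on_cmult_right G_summable)
  show summable: "(\<lambda>i. (cmod (\<Sum>\<^sub>\<infinity>m. f m * y m i))\<^sup>2) summable_on UNIV"
    by (rule summable_on_comparison_test[OF bound_summable pointwise]) simp
  have "sqnorm (\<lambda>i. \<Sum>\<^sub>\<infinity>m. f m * y m i) \<le> (\<Sum>\<^sub>\<infinity>i. C * G i)"
    unfolding sqnorm_def by (rule infsum_mono[OF summable bound_summable pointwise])
  then show "sqnorm (\<lambda>i. \<Sum>\<^sub>\<infinity>m. f m * y m i) \<le> (\<Sum>\<^sub>\<infinity>m. cmod (f m)) * (\<Sum>\<^sub>\<infinity>m. cmod (f m) * sqnorm (y m))"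
    by (simp add: infsum_cmult_right' G_sum C_def)
qed

lemma sqnorm_weighted_permutation:
  fixes z s :: "'a \<Rightarrow> complex"
  assumes t: "bij t" and s: "\<And>i. cmod (s i) = 1" and z: "(\<lambda>j. (cmod (z j))\<^sup>2) summable_on UNIV"
  shows "(\<lambda>i. (cmod (s i * z (t i)))\<^sup>2) summable_on UNIV"
    and "sqnorm (\<lambda>i. s i * z (t i)) = sqnorm z"
  using summable_on_reindex_bij_betw[OF t, of "\<lambda>j. (cmod (z j))\<^sup>2"]
    infsum_reindex_bij_betw[OF t, of "\<lambda>j. (cmod (z j))\<^sup>2"] z
  by (simp_all add: sqnorm_def norm_mult s)

lemma sqnorm_weighted_permutation_diff_le:
  fixes y s s' :: "'a \<Rightarrow> complex"
  assumes "bij t'" "bij t" "\<And>i. cmod (s' i) = 1" "\<And>i. cmod (s i) = 1"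
    and y: "(\<lambda>j. (cmod (y j))\<^sup>2) summable_on UNIV"
  shows "(\<lambda>i. (cmod (s' i * y (t' i) - s i * y (t i)))\<^sup>2) summable_on UNIV"
    and "sqnorm (\<lambda>i. s' i * y (t' i) - s i * y (t i)) \<le> 4 * sqnorm y"
proof -
  note perm' = sqnorm_weighted_permutation[OF assms(1,3) y]
    and perm = sqnorm_weighted_permutation[OF assms(2,4) y]
  show "(\<lambda>i. (cmod (s' i * y (t' i) - s i * y (t i)))\<^sup>2) summable_on UNIV"
    by (rule sqnorm_diff_le(1)[OF perm'(1) perm(1)])
  show "sqnorm (\<lambda>i. s' i * y (t' i) - s i * y (t i)) \<le> 4 * sqnorm y"
    using sqnorm_diff_le(2)[OF perm'(1) perm(1)] by (simp add: perm'(2) perm(2))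
qed

lemma infsum_tail_le:
  fixes z :: "'a \<Rightarrow> real"
  assumes "z summable_on UNIV" "\<delta> > 0"
  shows "\<exists>S. finite S \<and> infsum z (UNIV - S) \<le> \<delta>"
proof -
  obtain S where S: "finite S" "dist (sum z S) (infsum z UNIV) \<le> \<delta>"
    using infsum_finite_approximation[OF assms] by auto
  have "infsum z (UNIV - S) = infsum z UNIV - sum z S"
    using assms S by (subst infsum_Diff) auto
  then show ?thesis using S by (auto simp: dist_real_def)
qed

lemma infsum_tendsto_zero_if_tight:
  fixes a :: "nat \<Rightarrow> 'a \<Rightarrow> real"
  assumes nonneg: "\<And>n i. a n i \<ge> 0"
    and summable: "\<And>n. a n summable_on UNIV"
    and pointwise: "\<And>i. (\<lambda>n. a n i) \<longlonglongrightarrow> 0"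
    and tight: "\<And>\<delta>. \<delta> > 0 \<Longrightarrow> \<exists>P. finite P \<and> (\<forall>\<^sub>F n in sequentially. infsum (a n) (UNIV - P) \<le> \<delta>)"
  shows "(\<lambda>n. infsum (a n) UNIV) \<longlonglongrightarrow> 0"
proof (rule tendstoI)
  fix r :: real assume "r > 0"
  then obtain P where P: "finite P" and tail: "\<forall>\<^sub>F n in sequentially. infsum (a n) (UNIV - P) \<le> r / 2"
    using tight[of "r / 2"] by auto
  have "(\<lambda>n. \<Sum>i\<in>P. a n i) \<longlonglongrightarrow> 0"
    by (intro tendsto_null_sum pointwise)
  then have head: "\<forall>\<^sub>F n in sequentially. (\<Sum>i\<in>P. a n i) < r / 2"
    using \<open>r > 0\<close> by (intro order_tendstoD(2)) auto
  show "\<forall>\<^sub>F n in sequentially. dist (infsum (a n) UNIV) 0 < r"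
    using head tail
  proof eventually_elim
    case (elim n)
    have "infsum (a n) (UNIV - P) = infsum (a n) UNIV - sum (a n) P"
      using summable P by (subst infsum_Diff) auto
    moreover have "infsum (a n) UNIV \<ge> 0"
      using nonneg by (simp add: infsum_nonneg)
    ultimately show ?case using elim by simp
  qed
qed

lemma infsum_dominated_tendsto_zero:
  fixes c :: "'a \<Rightarrow> real" and g :: "nat \<Rightarrow> 'a \<Rightarrow> real"
  assumes c0: "\<And>m. c m \<ge> 0" and cs: "c summable_on UNIV"
    and g0: "\<And>n m. g n m \<ge> 0" and gM: "\<And>n m. g n m \<le> M"
    and pointwise: "\<And>m. (\<lambda>n. g n m) \<longlonglongrightarrow> 0"
  shows "(\<lambda>n. \<Sum>\<^sub>\<infinity>m. c m * g n m) \<longlonglongrightarrow> 0"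
proof (rule infsum_tendsto_zero_if_tight)
  have M0: "M \<ge> 0" using g0 gM order_trans by blast
  have dominated: "(\<lambda>m. c m * g n m) summable_on A" for n A
    by (rule summable_on_subset[OF summable_on_comparison_test[OF summable_on_cmult_left[OF cs, of M]]])
       (use c0 g0 gM in \<open>auto intro: mult_left_mono\<close>)
  then show "(\<lambda>m. c m * g n m) summable_on UNIV" for n .
  show "c m * g n m \<ge> 0" for n m using c0 g0 by simp
  show "(\<lambda>n. c m * g n m) \<longlonglongrightarrow> 0" for m
    using tendsto_mult_left[OF pointwise[of m], of "c m"] by simp
  fix \<delta> :: real assume "\<delta> > 0"
  then obtain F where F: "finite F" "infsum c (UNIV - F) \<le> \<delta> / (M + 1)"
    using infsum_tail_le[OF cs, of "\<delta> / (M + 1)"] M0 by auto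
  have "infsum (\<lambda>m. c m * g n m) (UNIV - F) \<le> \<delta>" for n
  proof -
    have "infsum (\<lambda>m. c m * g n m) (UNIV - F) \<le> infsum (\<lambda>m. c m * M) (UNIV - F)"
      by (intro infsum_mono dominated summable_on_subset[OF summable_on_cmult_left[OF cs]])
         (use c0 gM in \<open>auto intro: mult_left_mono\<close>)
    also have "\<dots> = infsum c (UNIV - F) * M" by (simp add: infsum_cmult_left')
    also have "\<dots> \<le> \<delta> / (M + 1) * M" using F M0 by (intro mult_right_mono) auto
    also have "\<dots> \<le> \<delta>" using \<open>\<delta> > 0\<close> M0 by (simp add: field_simps)
    finally show ?thesis .
  qed
  then show "\<exists>F. finite F \<and> (\<forall>\<^sub>F n in sequentially. infsum (\<lambda>m. c m * g n m) (UNIV - F) \<le> \<delta>)"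
    using F(1) by auto
qed

lemma permuted_sqnorm_tight:
  fixes z :: "'a \<Rightarrow> complex"
  assumes bij: "bij \<tau>" "\<And>n. bij (\<tau>s n)"
    and eventually_eq: "\<And>i. \<forall>\<^sub>F n in sequentially. \<tau>s n i = \<tau> i"
    and z: "(\<lambda>j. (cmod (z j))\<^sup>2) summable_on UNIV" and "\<delta> > 0"
  shows "\<exists>P. finite P \<and> (\<forall>\<^sub>F n in sequentially. \<forall>Q. P \<subseteq> Q \<longrightarrow> (\<Sum>\<^sub>\<infinity>i\<in>UNIV - Q. (cmod (z (\<tau>s n i)))\<^sup>2) \<le> \<delta>)"
proof -
  obtain S where S: "finite S" "(\<Sum>\<^sub>\<infinity>j\<in>UNIV - S. (cmod (z j))\<^sup>2) \<le> \<delta>"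
    using infsum_tail_le[OF z \<open>\<delta> > 0\<close>] by auto
  define P where "P = inv \<tau> ` S"
  have "\<forall>\<^sub>F n in sequentially. \<forall>j\<in>S. \<tau>s n (inv \<tau> j) = j"
  proof (intro eventually_ball_finite[OF S(1)] ballI)
    fix j
    have "\<tau> (inv \<tau> j) = j" using bij(1) by (simp add: bij_is_surj surj_f_inv_f)
    then show "\<forall>\<^sub>F n in sequentially. \<tau>s n (inv \<tau> j) = j"
      using eventually_eq[of "inv \<tau> j"] by simp
  qed
  then have "\<forall>\<^sub>F n in sequentially. \<forall>Q. P \<subseteq> Q \<longrightarrow> (\<Sum>\<^sub>\<infinity>i\<in>UNIV - Q. (cmod (z (\<tau>s n i)))\<^sup>2) \<le> \<delta>"
  proof eventually_elim
    case (elim n)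
    define R where "R = UNIV - \<tau>s n -` S"
    have "\<tau>s n ` R = UNIV - S"
      using bij(2)[of n] by (auto simp: R_def bij_def)
    then have bij_R: "bij_betw (\<tau>s n) R (UNIV - S)"
      by (rule bij_betw_subset[OF bij(2)[of n] subset_UNIV])
    have summable_R: "(\<lambda>i. (cmod (z (\<tau>s n i)))\<^sup>2) summable_on R"
      using summable_on_reindex_bij_betw[OF bij_R, of "\<lambda>j. (cmod (z j))\<^sup>2"]
        summable_on_subset[OF z, of "UNIV - S"] by simp
    have "UNIV - P \<subseteq> R"
    proof
      fix i assume "i \<in> UNIV - P"
      have "inv \<tau> (\<tau>s n i) = i" if "\<tau>s n i \<in> S"
        using elim that bij(2)[of n] by (metis bij_is_inj injD)
      with \<open>i \<in> UNIV - P\<close> show "i \<in> R" by (auto simp: P_def R_def) (metis image_eqI)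
    qed
    show ?case
    proof (intro allI impI)
      fix Q assume "P \<subseteq> Q"
      with \<open>UNIV - P \<subseteq> R\<close> have "(\<Sum>\<^sub>\<infinity>i\<in>UNIV - Q. (cmod (z (\<tau>s n i)))\<^sup>2) \<le> (\<Sum>\<^sub>\<infinity>i\<in>R. (cmod (z (\<tau>s n i)))\<^sup>2)"
        by (intro infsum_mono2 summable_on_subset[OF summable_R]) auto
      also have "\<dots> = (\<Sum>\<^sub>\<infinity>j\<in>UNIV - S. (cmod (z j))\<^sup>2)"
        by (rule infsum_reindex_bij_betw[OF bij_R])
      finally show "(\<Sum>\<^sub>\<infinity>i\<in>UNIV - Q. (cmod (z (\<tau>s n i)))\<^sup>2) \<le> \<delta>" using S(2) by simp
    qed
  qed
  moreover have "finite P" using S(1) by (simp add: P_def)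
  ultimately show ?thesis by blast
qed

lemma weighted_permutation_strong_tendsto:
  fixes z :: "'a \<Rightarrow> complex" and s :: "'a \<Rightarrow> complex" and ss :: "nat \<Rightarrow> 'a \<Rightarrow> complex"
  assumes bij: "bij \<tau>" "\<And>n. bij (\<tau>s n)"
    and unimodular: "\<And>i. cmod (s i) = 1" "\<And>n i. cmod (ss n i) = 1"
    and eventually_eq: "\<And>i. \<forall>\<^sub>F n in sequentially. \<tau>s n i = \<tau> i"
    and tendsto: "\<And>i. (\<lambda>n. ss n i) \<longlonglongrightarrow> s i"
    and z: "(\<lambda>j. (cmod (z j))\<^sup>2) summable_on UNIV"
  shows "(\<lambda>n. sqnorm (\<lambda>i. ss n i * z (\<tau>s n i) - s i * z (\<tau> i))) \<longlonglongrightarrow> 0"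
proof -
  define a where "a n i = (cmod (ss n i * z (\<tau>s n i) - s i * z (\<tau> i)))\<^sup>2" for n i
  have permuted: "(\<lambda>i. (cmod (z (t i)))\<^sup>2) summable_on A" if "bij t" for t :: "'a \<Rightarrow> 'a" and A
    using sqnorm_weighted_permutation(1)[of t "\<lambda>_. 1" z] that z by (auto intro: summable_on_subset)
  have a_le: "a n i \<le> 2 * (cmod (z (\<tau>s n i)))\<^sup>2 + 2 * (cmod (z (\<tau> i)))\<^sup>2" for n i
    using sq_cmod_diff_le[of "ss n i * z (\<tau>s n i)" "s i * z (\<tau> i)"]
    by (simp add: a_def norm_mult unimodular)
  have a_summable: "a n summable_on A" for n A
    by (rule summable_on_comparison_test[OF summable_on_add[OF summable_on_cmult_right
          summable_on_cmult_right, OF permuted permuted, OF bij(2) bij(1)] a_le]) (simp add: a_def)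
  have "(\<lambda>n. infsum (a n) UNIV) \<longlonglongrightarrow> 0"
  proof (rule infsum_tendsto_zero_if_tight[OF _ a_summable])
    show "a n i \<ge> 0" for n i by (simp add: a_def)
  next
    fix i
    have "(\<lambda>n. (cmod (ss n i * z (\<tau> i) - s i * z (\<tau> i)))\<^sup>2) \<longlonglongrightarrow> (cmod (s i * z (\<tau> i) - s i * z (\<tau> i)))\<^sup>2"
      by (intro tendsto_intros tendsto)
    then have "(\<lambda>n. (cmod (ss n i * z (\<tau> i) - s i * z (\<tau> i)))\<^sup>2) \<longlonglongrightarrow> 0"
      by simp
    moreover have "\<forall>\<^sub>F n in sequentially. (cmod (ss n i * z (\<tau> i) - s i * z (\<tau> i)))\<^sup>2 = a n i"
      using eventually_eq[of i] by eventually_elim (simp add: a_def)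
    ultimately show "(\<lambda>n. a n i) \<longlonglongrightarrow> 0"
      by (rule Lim_transform_eventually)
  next
    fix \<delta> :: real assume "\<delta> > 0"
    then obtain P P' where "finite P" "finite P'"
      and tail: "\<forall>\<^sub>F n in sequentially. \<forall>Q. P \<subseteq> Q \<longrightarrow> (\<Sum>\<^sub>\<infinity>i\<in>UNIV - Q. (cmod (z (\<tau>s n i)))\<^sup>2) \<le> \<delta> / 4"
      and tail': "\<forall>\<^sub>F n in sequentially. \<forall>Q. P' \<subseteq> Q \<longrightarrow> (\<Sum>\<^sub>\<infinity>i\<in>UNIV - Q. (cmod (z (\<tau> i)))\<^sup>2) \<le> \<delta> / 4"
      using permuted_sqnorm_tight[OF bij eventually_eq z, of "\<delta> / 4"]
        permuted_sqnorm_tight[where \<tau>s = "\<lambda>_. \<tau>", OF bij(1) bij(1) _ z, of "\<delta> / 4"]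
      by auto
    from tail tail' have "\<forall>\<^sub>F n in sequentially. infsum (a n) (UNIV - (P \<union> P')) \<le> \<delta>"
    proof eventually_elim
      case (elim n)
      have "infsum (a n) (UNIV - (P \<union> P')) \<le> (\<Sum>\<^sub>\<infinity>i\<in>UNIV - (P \<union> P'). 2 * (cmod (z (\<tau>s n i)))\<^sup>2 + 2 * (cmod (z (\<tau> i)))\<^sup>2)"
        by (intro infsum_mono a_summable a_le summable_on_add summable_on_cmult_right permuted bij)
      also have "\<dots> = 2 * (\<Sum>\<^sub>\<infinity>i\<in>UNIV - (P \<union> P'). (cmod (z (\<tau>s n i)))\<^sup>2)
          + 2 * (\<Sum>\<^sub>\<infinity>i\<in>UNIV - (P \<union> P'). (cmod (z (\<tau> i)))\<^sup>2)"
        using bij by (simp add: infsum_add infsum_cmult_right' permuted summable_on_cmult_right)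
      also have "\<dots> \<le> \<delta>"
        using elim(1)[rule_format, of "P \<union> P'"] elim(2)[rule_format, of "P \<union> P'"] by simp
      finally show ?case .
    qed
    then show "\<exists>P. finite P \<and> (\<forall>\<^sub>F n in sequentially. infsum (a n) (UNIV - P) \<le> \<delta>)"
      using \<open>finite P\<close> \<open>finite P'\<close> by blast
  qed
  then show ?thesis by (simp add: a_def[abs_def] sqnorm_def)
qed

section \<open>Series of weighted permutations\<close>

definition perm_combination ::
    "('b \<Rightarrow> complex) \<Rightarrow> ('b \<Rightarrow> 'a \<Rightarrow> complex) \<Rightarrow> ('b \<Rightarrow> 'a \<Rightarrow> 'a) \<Rightarrow> ('a \<Rightarrow> complex) \<Rightarrow> 'a \<Rightarrow> complex" where
  "perm_combination f s t y i = (\<Sum>\<^sub>\<infinity>m. f m * (s m i * y (t m i)))"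

lemma perm_combination_summable:
  assumes f: "(\<lambda>m. cmod (f m)) summable_on UNIV"
    and s: "\<And>m i. cmod (s m i) = 1" and y: "\<And>j. cmod (y j) \<le> B"
  shows "(\<lambda>m. f m * (s m i * y (t m i))) summable_on UNIV"
proof (rule abs_summable_summable, rule summable_on_comparison_test[OF summable_on_cmult_left[OF f, of B]])
  show "norm (f m * (s m i * y (t m i))) \<le> cmod (f m) * B" for m
    using y[of "t m i"] by (simp add: norm_mult s mult_left_mono)
qed simp

lemma perm_combination_add:
  assumes f: "(\<lambda>m. cmod (f m)) summable_on UNIV" and s: "\<And>m i. cmod (s m i) = 1"
    and u: "\<And>j. cmod (u j) \<le> B" and z: "\<And>j. cmod (z j) \<le> B'"
  shows "perm_combination f s t (\<lambda>j. u j + z j) i = perm_combination f s t u i + perm_combination f s t z i"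
  unfolding perm_combination_def
  using infsum_add[OF perm_combination_summable[where s = s and y = u and t = t and i = i, OF f s u]
      perm_combination_summable[where s = s and y = z and t = t and i = i, OF f s z]]
  by (simp add: algebra_simps)

lemma perm_combination_diff:
  assumes f: "(\<lambda>m. cmod (f m)) summable_on UNIV"
    and s': "\<And>m i. cmod (s' m i) = 1" and s: "\<And>m i. cmod (s m i) = 1" and y: "\<And>j. cmod (y j) \<le> B"
  shows "perm_combination f s' t' y i - perm_combination f s t y i
    = (\<Sum>\<^sub>\<infinity>m. f m * (s' m i * y (t' m i) - s m i * y (t m i)))"
proof -
  have "(\<Sum>\<^sub>\<infinity>m. f m * (s' m i * y (t' m i)) + - (f m * (s m i * y (t m i))))
      = perm_combination f s' t' y i + (\<Sum>\<^sub>\<infinity>m. - (f m * (s m i * y (t m i))))"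
    unfolding perm_combination_def
    using perm_combination_summable[OF f s' y, where t = t' and i = i]
      perm_combination_summable[OF f s y, where t = t and i = i]
    by (intro infsum_add) (simp_all add: summable_on_uminus)
  then show ?thesis
    by (simp add: infsum_uminus perm_combination_def algebra_simps)
qed

lemma sqnorm_perm_combination_diff_le:
  assumes f: "(\<lambda>m. cmod (f m)) summable_on UNIV"
    and s': "\<And>m i. cmod (s' m i) = 1" and s: "\<And>m i. cmod (s m i) = 1"
    and t': "\<And>m. bij (t' m)" and t: "\<And>m. bij (t m)"
    and y: "(\<lambda>j. (cmod (y j))\<^sup>2) summable_on UNIV"
  shows "(\<lambda>i. (cmod (perm_combination f s' t' y i - perm_combination f s t y i))\<^sup>2) summable_on UNIV"
    and "sqnorm (\<lambda>i. perm_combination f s' t' y i - perm_combination f s t y i)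
      \<le> (\<Sum>\<^sub>\<infinity>m. cmod (f m)) * (\<Sum>\<^sub>\<infinity>m. cmod (f m) * sqnorm (\<lambda>i. s' m i * y (t' m i) - s m i * y (t m i)))"
    and "sqnorm (\<lambda>i. perm_combination f s' t' y i - perm_combination f s t y i)
      \<le> 4 * (\<Sum>\<^sub>\<infinity>m. cmod (f m))\<^sup>2 * sqnorm y"
proof -
  define d where "d m i = s' m i * y (t' m i) - s m i * y (t m i)" for m i
  note y_bounded = cmod_le_sqrt_sqnorm[OF y]
  have diff: "perm_combination f s' t' y i - perm_combination f s t y i = (\<Sum>\<^sub>\<infinity>m. f m * d m i)" for i
    unfolding d_def by (rule perm_combination_diff[OF f s' s y_bounded])
  have d_bounded: "cmod (d m i) \<le> 2 * sqrt (sqnorm y)" for m i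
    using norm_triangle_ineq4[of "s' m i * y (t' m i)" "s m i * y (t m i)"]
      y_bounded[of "t' m i"] y_bounded[of "t m i"]
    by (simp add: d_def norm_mult s' s)
  note rows = sqnorm_weighted_permutation_diff_le[OF t' t s' s y]
  have d_summable: "(\<lambda>i. (cmod (d m i))\<^sup>2) summable_on UNIV" for m
    unfolding d_def by (rule rows(1))
  have d_le: "sqnorm (d m) \<le> 4 * sqnorm y" for m
    unfolding d_def[abs_def] by (rule rows(2))
  note combination = sqnorm_combination_le[where y = d, OF f d_bounded d_summable d_le]
  show "(\<lambda>i. (cmod (perm_combination f s' t' y i - perm_combination f s t y i))\<^sup>2) summable_on UNIV"
    using combination(1) by (simp add: diff)
  show le: "sqnorm (\<lambda>i. perm_combination f s' t' y i - perm_combination f s t y i)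
      \<le> (\<Sum>\<^sub>\<infinity>m. cmod (f m)) * (\<Sum>\<^sub>\<infinity>m. cmod (f m) * sqnorm (\<lambda>i. s' m i * y (t' m i) - s m i * y (t m i)))"
    using combination(2) by (simp add: diff d_def[abs_def])
  have weights: "(\<lambda>m. cmod (f m) * (4 * sqnorm y)) summable_on UNIV"
    by (rule summable_on_cmult_left[OF f])
  have weighted_rows: "(\<lambda>m. cmod (f m) * sqnorm (d m)) summable_on UNIV"
    by (rule summable_on_comparison_test[OF weights]) (simp_all add: mult_left_mono d_le sqnorm_nonneg)
  have "(\<Sum>\<^sub>\<infinity>m. cmod (f m) * sqnorm (d m)) \<le> (\<Sum>\<^sub>\<infinity>m. cmod (f m) * (4 * sqnorm y))"
    by (rule infsum_mono[OF weighted_rows weights]) (simp add: mult_left_mono d_le)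
  also have "\<dots> = (\<Sum>\<^sub>\<infinity>m. cmod (f m)) * (4 * sqnorm y)"
    by (rule infsum_cmult_left')
  finally have "(\<Sum>\<^sub>\<infinity>m. cmod (f m)) * (\<Sum>\<^sub>\<infinity>m. cmod (f m) * sqnorm (d m))
      \<le> (\<Sum>\<^sub>\<infinity>m. cmod (f m)) * ((\<Sum>\<^sub>\<infinity>m. cmod (f m)) * (4 * sqnorm y))"
    by (rule mult_left_mono) (simp add: infsum_nonneg)
  with le show "sqnorm (\<lambda>i. perm_combination f s' t' y i - perm_combination f s t y i)
      \<le> 4 * (\<Sum>\<^sub>\<infinity>m. cmod (f m))\<^sup>2 * sqnorm y"
    by (simp add: d_def[abs_def] power2_eq_square algebra_simps)
qed

lemma perm_combination_strong_tendsto: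
  assumes f: "(\<lambda>m. cmod (f m)) summable_on UNIV"
    and ss: "\<And>n m i. cmod (ss n m i) = 1" and s: "\<And>m i. cmod (s m i) = 1"
    and ts: "\<And>n m. bij (ts n m)" and t: "\<And>m. bij (t m)"
    and eventually_eq: "\<And>m i. \<forall>\<^sub>F n in sequentially. ts n m i = t m i"
    and tendsto: "\<And>m i. (\<lambda>n. ss n m i) \<longlonglongrightarrow> s m i"
    and y: "(\<lambda>j. (cmod (y j))\<^sup>2) summable_on UNIV"
  shows "(\<lambda>n. sqnorm (\<lambda>i. perm_combination f (ss n) (ts n) y i - perm_combination f s t y i)) \<longlonglongrightarrow> 0"
proof -
  define N where "N n m = sqnorm (\<lambda>i. ss n m i * y (ts n m i) - s m i * y (t m i))" for n m
  have N_le: "N n m \<le> 4 * sqnorm y" for n m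
    unfolding N_def by (rule sqnorm_weighted_permutation_diff_le(2)[OF ts t ss s y])
  have N_tendsto: "(\<lambda>n. N n m) \<longlonglongrightarrow> 0" for m
    unfolding N_def
    by (rule weighted_permutation_strong_tendsto[where \<tau> = "t m" and \<tau>s = "\<lambda>n. ts n m"
          and s = "s m" and ss = "\<lambda>n. ss n m", OF t ts s ss eventually_eq tendsto y])
  have "(\<lambda>n. \<Sum>\<^sub>\<infinity>m. cmod (f m) * N n m) \<longlonglongrightarrow> 0"
    by (rule infsum_dominated_tendsto_zero[OF norm_ge_zero f _ N_le N_tendsto]) (simp add: N_def sqnorm_nonneg)
  then have upper: "(\<lambda>n. (\<Sum>\<^sub>\<infinity>m. cmod (f m)) * (\<Sum>\<^sub>\<infinity>m. cmod (f m) * N n m)) \<longlonglongrightarrow> 0"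
    by (rule tendsto_mult_right_zero)
  show ?thesis
  proof (rule tendsto_sandwich[OF _ _ tendsto_const upper])
    show "\<forall>\<^sub>F n in sequentially. 0 \<le> sqnorm (\<lambda>i. perm_combination f (ss n) (ts n) y i - perm_combination f s t y i)"
      by (simp add: sqnorm_nonneg)
    show "\<forall>\<^sub>F n in sequentially. sqnorm (\<lambda>i. perm_combination f (ss n) (ts n) y i - perm_combination f s t y i)
        \<le> (\<Sum>\<^sub>\<infinity>m. cmod (f m)) * (\<Sum>\<^sub>\<infinity>m. cmod (f m) * N n m)"
      unfolding N_def
      by (intro always_eventually allI sqnorm_perm_combination_diff_le(2)[where s' = "ss n" and t' = "ts n" for n, OF f ss s ts t y])
  qed
qed

section \<open>Operators on l2 of the lattice\<close>

lemma l2norm_eq_sqrt_sqnorm: "l2norm x = sqrt (sqnorm x)"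
  by (simp add: l2norm_def sqnorm_def)

lemma ell2_diff: "ell2 u \<Longrightarrow> ell2 z \<Longrightarrow> ell2 (\<lambda>i. u i - z i)"
  unfolding ell2_def by (rule sqnorm_diff_le(1))

lemma ell2_add: "ell2 u \<Longrightarrow> ell2 z \<Longrightarrow> ell2 (\<lambda>i. u i + z i)"
  using ell2_diff[of u "\<lambda>i. - z i"] by (simp add: ell2_def)

lemma opnorm_le:
  assumes "b \<ge> 0" and "\<And>x. ell2 x \<Longrightarrow> l2norm x \<le> 1 \<Longrightarrow> sqnorm (A x) \<le> b\<^sup>2"
  shows "opnorm A \<le> b" and "opnorm A \<ge> 0"
proof -
  define S where "S = {l2norm (A x) | x. ell2 x \<and> l2norm x \<le> 1}"
  have "l2norm (A x) \<le> b" if "ell2 x" "l2norm x \<le> 1" for x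
    using real_sqrt_le_mono[OF assms(2)[OF that]] \<open>b \<ge> 0\<close> by (simp add: l2norm_eq_sqrt_sqnorm)
  then have bounded: "\<forall>s\<in>S. s \<le> b" by (auto simp: S_def)
  have "ell2 (\<lambda>_. 0)" "l2norm (\<lambda>_. 0) \<le> 1"
    by (auto simp: ell2_def l2norm_def)
  then have "l2norm (A (\<lambda>_. 0)) \<in> S" by (auto simp: S_def)
  with bounded have "Sup S \<le> b" "l2norm (A (\<lambda>_. 0)) \<le> Sup S"
    by (auto intro!: cSup_least cSup_upper bdd_aboveI2)
  moreover have "l2norm (A (\<lambda>_. 0)) \<ge> 0"
    by (simp add: l2norm_eq_sqrt_sqnorm sqnorm_nonneg)
  ultimately show "opnorm A \<le> b" "opnorm A \<ge> 0"
    by (simp_all add: opnorm_def S_def)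
qed

lemma sqnorm_additive_le:
  assumes "ell2 u" "ell2 z"
    and additive: "A (\<lambda>i. u i + z i) = (\<lambda>i. A u i + A z i)"
    and bounded: "ell2 (A u)" "ell2 (A z)" "sqnorm (A u) \<le> C * sqnorm u"
  shows "sqnorm (A (\<lambda>i. u i + z i)) \<le> 2 * C * sqnorm u + 2 * sqnorm (A z)"
proof -
  have "sqnorm (A (\<lambda>i. u i + z i)) = sqnorm (\<lambda>i. A u i - - A z i)"
    by (simp add: additive)
  also have "\<dots> \<le> 2 * sqnorm (A u) + 2 * sqnorm (\<lambda>i. - A z i)"
    using bounded by (intro sqnorm_diff_le(2)) (simp_all add: ell2_def)
  finally show ?thesis
    using bounded(3) by (simp add: sqnorm_def)
qed

lemma compact_op_sqnorm_net:
  assumes T: "compact_op T" and "e > 0"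
  obtains F where "finite F" "\<forall>z\<in>F. ell2 z"
    and "\<And>x. ell2 x \<Longrightarrow> l2norm x \<le> 1 \<Longrightarrow> \<exists>z\<in>F. ell2 (\<lambda>i. T x i - z i) \<and> sqnorm (\<lambda>i. T x i - z i) \<le> e"
proof -
  have T_ell2: "\<And>x. ell2 x \<Longrightarrow> ell2 (T x)"
    and nets: "\<And>\<epsilon>. \<epsilon> > 0 \<Longrightarrow> \<exists>F. finite F \<and> (\<forall>z\<in>F. ell2 z) \<and>
        (\<forall>x. ell2 x \<and> l2norm x \<le> 1 \<longrightarrow> (\<exists>z\<in>F. l2norm (\<lambda>i. T x i - z i) < \<epsilon>))"
    using T unfolding compact_op_def by blast+
  obtain F where F: "finite F" "\<forall>z\<in>F. ell2 z"
    and net: "\<And>x. ell2 x \<Longrightarrow> l2norm x \<le> 1 \<Longrightarrow> \<exists>z\<in>F. l2norm (\<lambda>i. T x i - z i) < sqrt e"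
    using nets[of "sqrt e"] \<open>e > 0\<close> by auto
  have "\<exists>z\<in>F. ell2 (\<lambda>i. T x i - z i) \<and> sqnorm (\<lambda>i. T x i - z i) \<le> e" if x: "ell2 x" "l2norm x \<le> 1" for x
  proof -
    obtain z where z: "z \<in> F" "sqrt (sqnorm (\<lambda>i. T x i - z i)) < sqrt e"
      using net[OF x] by (auto simp: l2norm_eq_sqrt_sqnorm)
    have "ell2 (\<lambda>i. T x i - z i)"
      using ell2_diff[OF T_ell2[OF x(1)]] F(2) z(1) by blast
    moreover have "sqnorm (\<lambda>i. T x i - z i) \<le> e"
      using z(2) by simp
    ultimately show ?thesis using z(1) by blast
  qed
  with F that show ?thesis by blast
qed

lemma opnorm_compose_compact_tendsto_zero:
  fixes E :: "nat \<Rightarrow> (('d::finite) pt \<Rightarrow> complex) \<Rightarrow> 'd pt \<Rightarrow> complex"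
  assumes T: "compact_op T" and "C \<ge> 0"
    and additive: "\<And>n u z. ell2 u \<Longrightarrow> ell2 z \<Longrightarrow> E n (\<lambda>i. u i + z i) = (\<lambda>i. E n u i + E n z i)"
    and bounded: "\<And>n y. ell2 y \<Longrightarrow> ell2 (E n y) \<and> sqnorm (E n y) \<le> C * sqnorm y"
    and strong: "\<And>z. ell2 z \<Longrightarrow> (\<lambda>n. sqnorm (E n z)) \<longlonglongrightarrow> 0"
  shows "(\<lambda>n. opnorm (\<lambda>x. E n (T x))) \<longlonglongrightarrow> 0"
proof (rule tendstoI)
  fix r :: real assume "r > 0"
  define e where "e = r\<^sup>2 / (16 * (C + 1))"
  have "e > 0" using \<open>r > 0\<close> \<open>C \<ge> 0\<close> by (simp add: e_def)
  have "C * e = r\<^sup>2 / 16 * (C / (C + 1))" by (simp add: e_def)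
  also have "\<dots> \<le> r\<^sup>2 / 16" using \<open>C \<ge> 0\<close> by (intro mult_left_le) simp_all
  finally have small: "C * e \<le> r\<^sup>2 / 16" .
  obtain F where F: "finite F" "\<forall>z\<in>F. ell2 z"
    and net: "\<And>x. ell2 x \<Longrightarrow> l2norm x \<le> 1 \<Longrightarrow> \<exists>z\<in>F. ell2 (\<lambda>i. T x i - z i) \<and> sqnorm (\<lambda>i. T x i - z i) \<le> e"
    using compact_op_sqnorm_net[OF T \<open>e > 0\<close>] by blast
  have "\<forall>\<^sub>F n in sequentially. \<forall>z\<in>F. sqnorm (E n z) < r\<^sup>2 / 16"
    using F \<open>r > 0\<close> by (intro eventually_ball_finite ballI order_tendstoD(2)[OF strong]) auto
  then show "\<forall>\<^sub>F n in sequentially. dist (opnorm (\<lambda>x. E n (T x))) 0 < r"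
  proof eventually_elim
    case (elim n)
    have bound: "sqnorm (E n (T x)) \<le> (r / 2)\<^sup>2" if x: "ell2 x" "l2norm x \<le> 1" for x
    proof -
      obtain z where z: "z \<in> F" and close: "ell2 (\<lambda>i. T x i - z i)" "sqnorm (\<lambda>i. T x i - z i) \<le> e"
        using net[OF x] by blast
      define u where "u i = T x i - z i" for i
      have "ell2 u" "ell2 z" using close(1) F(2) z by (simp_all add: u_def[abs_def])
      have Tx: "T x = (\<lambda>i. u i + z i)" by (simp add: u_def)
      have Eu: "ell2 (E n u)" "sqnorm (E n u) \<le> C * sqnorm u" and Ez: "ell2 (E n z)"
        using bounded[OF \<open>ell2 u\<close>, of n] bounded[OF \<open>ell2 z\<close>, of n] by auto
      have "sqnorm (E n (T x)) \<le> 2 * C * sqnorm u + 2 * sqnorm (E n z)"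
        unfolding Tx
        by (rule sqnorm_additive_le[OF \<open>ell2 u\<close> \<open>ell2 z\<close> additive[OF \<open>ell2 u\<close> \<open>ell2 z\<close>] Eu(1) Ez Eu(2)])
      also have "\<dots> \<le> (r / 2)\<^sup>2"
      proof -
        have "sqnorm (E n z) < r\<^sup>2 / 16" using elim z by blast
        moreover have "C * sqnorm u \<le> C * e"
          using mult_left_mono[OF close(2) \<open>C \<ge> 0\<close>] by (simp add: u_def[abs_def])
        moreover have "(r / 2)\<^sup>2 = r\<^sup>2 / 4" by (simp add: power_divide)
        ultimately show ?thesis using small by linarith
      qed
      finally show ?thesis .
    qed
    have "opnorm (\<lambda>x. E n (T x)) \<le> r / 2" "opnorm (\<lambda>x. E n (T x)) \<ge> 0"
      using opnorm_le[of "r / 2", OF _ bound] \<open>r > 0\<close> by simp_all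
    then show ?case using \<open>r > 0\<close> by simp
  qed
qed

section \<open>Representatives modulo k\<close>

definition lat_coord :: "enat \<Rightarrow> int \<Rightarrow> bool" where
  "lat_coord c x \<longleftrightarrow> (case c of enat c \<Rightarrow> int c dvd x | \<infinity> \<Rightarrow> x = 0)"

definition rep_coord :: "enat \<Rightarrow> int \<Rightarrow> int" where
  "rep_coord c x = (case c of enat c \<Rightarrow> \<lfloor>(1 - real c) / 2\<rfloor> + (x - \<lfloor>(1 - real c) / 2\<rfloor>) mod int c
     | \<infinity> \<Rightarrow> x)"

definition I_coord :: "enat \<Rightarrow> int \<Rightarrow> bool" where
  "I_coord c x \<longleftrightarrow> (case c of enat c \<Rightarrow> \<lfloor>(1 - real c) / 2\<rfloor> \<le> x \<and> x \<le> \<lfloor>(real c - 1) / 2\<rfloor>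
     | \<infinity> \<Rightarrow> True)"

lemma in_lat_iff_coord: "in_lat k m \<longleftrightarrow> (\<forall>j. lat_coord (k $ j) (m $ j))"
  by (simp add: in_lat_def lat_coord_def)

lemma rep_nth [simp]: "rep k n $ j = rep_coord (k $ j) (n $ j)"
  by (simp add: rep_def rep_coord_def)

lemma I_set_iff_coord: "m \<in> I_set k \<longleftrightarrow> (\<forall>j. I_coord (k $ j) (m $ j))"
  by (simp add: I_set_def I_coord_def)

lemma floor_half_lower: "\<lfloor>(1 - real c) / 2\<rfloor> = (1 - int c) div 2"
  by (metis floor_divide_of_int_eq of_int_1 of_int_diff of_int_numeral of_int_of_nat_eq)

lemma floor_half_upper: "\<lfloor>(real c - 1) / 2\<rfloor> = (int c - 1) div 2"
  by (metis floor_divide_of_int_eq of_int_1 of_int_diff of_int_numeral of_int_of_nat_eq)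

lemma lat_coord_diff: "lat_coord c a \<Longrightarrow> lat_coord c b \<Longrightarrow> lat_coord c (a - b)"
  by (cases c) (auto simp: lat_coord_def)

lemma lat_coord_minus: "lat_coord c a \<Longrightarrow> lat_coord c (- a)"
  by (cases c) (auto simp: lat_coord_def)

lemma lat_coord_rep: "lat_coord c (x - rep_coord c x)"
proof (cases c)
  case (enat n)
  define l where "l = \<lfloor>(1 - real n) / 2\<rfloor>"
  have "x - (l + (x - l) mod int n) = int n * ((x - l) div int n)"
    by (simp add: minus_mod_eq_mult_div[symmetric])
  then show ?thesis using enat by (simp add: lat_coord_def rep_coord_def l_def)
qed (simp add: lat_coord_def rep_coord_def)

lemma rep_coord_eq: "lat_coord c (x - y) \<Longrightarrow> rep_coord c x = rep_coord c y"
  by (cases c) (auto simp: lat_coord_def rep_coord_def mod_eq_dvd_iff)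

lemma I_coord_rep: "c \<ge> 2 \<Longrightarrow> I_coord c (rep_coord c x)"
proof (cases c)
  case (enat n)
  assume "c \<ge> 2"
  then have "n \<ge> 2" using enat by (simp add: numeral_eq_enat)
  then have "0 \<le> (x - (1 - int n) div 2) mod int n" "(x - (1 - int n) div 2) mod int n < int n"
    by auto
  moreover have "(int n - 1) div 2 - (1 - int n) div 2 = int n - 1" by presburger
  ultimately show ?thesis
    using enat by (simp add: I_coord_def rep_coord_def floor_half_lower floor_half_upper)
qed (simp add: I_coord_def)

lemma rep_coord_I_coord: "c \<ge> 2 \<Longrightarrow> I_coord c x \<Longrightarrow> rep_coord c x = x"
proof (cases c)
  case (enat n)
  assume "c \<ge> 2" "I_coord c x"
  then have "(1 - int n) div 2 \<le> x" "x \<le> (int n - 1) div 2" using enat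
    by (auto simp: I_coord_def floor_half_lower floor_half_upper)
  moreover have "(int n - 1) div 2 - (1 - int n) div 2 = int n - 1" by presburger
  ultimately have "(x - (1 - int n) div 2) mod int n = x - (1 - int n) div 2"
    by (intro mod_pos_pos_trivial) auto
  then show ?thesis using enat by (simp add: rep_coord_def floor_half_lower)
qed (simp add: rep_coord_def)

lemma rep_coord_small:
  assumes "c \<ge> enat (2 * N + 2)" "\<bar>x\<bar> \<le> int N"
  shows "rep_coord c x = x"
proof (cases c)
  case (enat n)
  then have "n \<ge> 2 * N + 2" using assms by simp
  then have "I_coord c x" "c \<ge> 2"
    using enat assms(2) by (auto simp: I_coord_def floor_half_lower floor_half_upper numeral_eq_enat)
  then show ?thesis by (rule rep_coord_I_coord[rotated])
qed (simp add: rep_coord_def)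

lemma lat_zero [simp]: "in_lat k 0"
  by (simp add: in_lat_def split: enat.split)

lemma lat_diff: "in_lat k a \<Longrightarrow> in_lat k b \<Longrightarrow> in_lat k (a - b)"
  by (simp add: in_lat_iff_coord lat_coord_diff)

lemma lat_minus: "in_lat k a \<Longrightarrow> in_lat k (- a)"
  by (simp add: in_lat_iff_coord lat_coord_minus)

lemma lat_rep: "in_lat k (x - rep k x)"
  by (simp add: in_lat_iff_coord lat_coord_rep)

lemma rep_eq_if_lat: "in_lat k (x - y) \<Longrightarrow> rep k x = rep k y"
  by (simp add: in_lat_iff_coord vec_eq_iff rep_coord_eq)

lemma rep_in_I_set: "\<forall>j. k $ j \<ge> 2 \<Longrightarrow> rep k x \<in> I_set k"
  by (simp add: I_set_iff_coord I_coord_rep)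

lemma rep_I_set: "\<forall>j. k $ j \<ge> 2 \<Longrightarrow> x \<in> I_set k \<Longrightarrow> rep k x = x"
  by (simp add: I_set_iff_coord vec_eq_iff rep_coord_I_coord)

lemma rep_rep [simp]: "rep k (rep k x) = rep k x"
proof (rule rep_eq_if_lat)
  show "in_lat k (rep k x - x)"
    using lat_minus[OF lat_rep[of k x]] by simp
qed

section \<open>The representation pi of an l1 symbol\<close>

text \<open>The point \<open>i\<close> lies in the block \<open>I_k + p\<close>, \<open>p = i - rep k i\<close>, on which \<open>pi_rep\<close> acts as a
  conjugate of \<open>rho\<close>; \<open>block_shift k i m\<close> is the point of that block congruent to \<open>i + m\<close>.\<close>

definition block_shift :: "enat ^ ('d::finite) \<Rightarrow> 'd pt \<Rightarrow> 'd pt \<Rightarrow> 'd pt" where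
  "block_shift k i m = rep k (rep k i + m) + (i - rep k i)"

lemma block_shift_inverse: "block_shift k (block_shift k i m) (- m) = i"
proof -
  define r where "r = rep k (rep k i + m)"
  have rep_shift: "rep k (r + (i - rep k i)) = r"
    using rep_eq_if_lat[of k "r + (i - rep k i)" r] lat_rep[of k i] by (simp add: r_def)
  have rep_back: "rep k (r - m) = rep k i"
  proof -
    have "r - m - rep k i = - ((rep k i + m) - rep k (rep k i + m))"
      by (simp add: r_def algebra_simps)
    then have "in_lat k (r - m - rep k i)" by (metis lat_minus lat_rep)
    then show ?thesis using rep_eq_if_lat by fastforce
  qed
  show ?thesis
    by (simp add: block_shift_def r_def[symmetric] rep_shift rep_back)
qed

lemma bij_block_shift: "bij (\<lambda>i. block_shift k i m)"
  by (rule bij_betwI[where g = "\<lambda>i. block_shift k i (- m)"])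
     (auto simp: block_shift_inverse simp del: add_uminus_conv_diff
       intro: block_shift_inverse[of k _ "- m", simplified])

lemma block_shift_nth:
  "block_shift k i m $ j = rep_coord (k $ j) (rep_coord (k $ j) (i $ j) + m $ j) + (i $ j - rep_coord (k $ j) (i $ j))"
  by (simp add: block_shift_def)

lemma block_shift_eventually_eq:
  assumes "\<forall>j. enat_conv (\<lambda>n. ks n $ j) (k $ j)"
  shows "\<forall>\<^sub>F n in sequentially. block_shift (ks n) i m = block_shift k i m"
proof -
  have "\<forall>\<^sub>F n in sequentially. block_shift (ks n) i m $ j = block_shift k i m $ j" for j
  proof (cases "k $ j")
    case (enat c)
    then have "\<forall>\<^sub>F n in sequentially. ks n $ j = enat c"
      using assms[rule_format, of j] by (simp add: enat_conv_def)
    then show ?thesis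
      by eventually_elim (simp add: block_shift_nth enat)
  next
    case infinity
    define N where "N = nat (\<bar>i $ j\<bar> + \<bar>m $ j\<bar>)"
    have "\<forall>\<^sub>F n in sequentially. ks n $ j \<ge> enat (2 * N + 2)"
      using assms[rule_format, of j] infinity by (simp add: enat_conv_def del: of_nat_Suc)
    then show ?thesis
    proof eventually_elim
      case (elim n)
      have "rep_coord (ks n $ j) (i $ j) = i $ j" "rep_coord (ks n $ j) (i $ j + m $ j) = i $ j + m $ j"
        by (rule rep_coord_small[OF elim], simp add: N_def)+
      then show ?case using infinity by (simp add: block_shift_nth rep_coord_def)
    qed
  qed
  then have "\<forall>\<^sub>F n in sequentially. \<forall>j. block_shift (ks n) i m $ j = block_shift k i m $ j"
    by (rule eventually_all_finite)
  then show ?thesis by (simp add: vec_eq_iff)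
qed

lemma skew_bichar_unimodular: "skew_bichar k \<sigma> \<Longrightarrow> cmod (\<sigma> a b) = 1"
  unfolding skew_bichar_def by blast

lemma skew_bichar_periodic:
  assumes "skew_bichar k \<sigma>" "in_lat k (a - a')" "in_lat k (b - b')"
  shows "\<sigma> a b = \<sigma> a' b'"
  using assms unfolding skew_bichar_def by metis

lemma bij_betw_I_set_times_lattice:
  assumes "\<forall>j. k $ j \<ge> 2"
  shows "bij_betw (\<lambda>(n, l). l + n) (I_set k \<times> {l. in_lat k l}) UNIV"
proof (rule bij_betwI[where g = "\<lambda>m. (rep k m, m - rep k m)"])
  show "(\<lambda>m. (rep k m, m - rep k m)) \<in> UNIV \<rightarrow> I_set k \<times> {l. in_lat k l}"
    using rep_in_I_set[OF assms] lat_rep by auto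
  fix x assume "x \<in> I_set k \<times> {l. in_lat k l}"
  then obtain n l where x: "x = (n, l)" "n \<in> I_set k" "in_lat k l" by auto
  have "rep k (l + n) = rep k n" by (rule rep_eq_if_lat) (simp add: x)
  then show "(\<lambda>m. (rep k m, m - rep k m)) ((\<lambda>(n, l). l + n) x) = x"
    using rep_I_set[OF assms x(2)] by (simp add: x)
qed auto

definition twist :: "enat ^ ('d::finite) \<Rightarrow> ('d pt \<Rightarrow> 'd pt \<Rightarrow> complex) \<Rightarrow> 'd pt \<Rightarrow> 'd pt \<Rightarrow> complex" where
  "twist k \<sigma> m i = \<sigma> (block_shift k i m) m"

lemma twist_unimodular: "in_Xi k \<sigma> \<Longrightarrow> cmod (twist k \<sigma> m i) = 1"
  unfolding in_Xi_def twist_def using skew_bichar_unimodular by blast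

lemma twist_eq:
  assumes "skew_bichar k \<sigma>"
  shows "twist k \<sigma> m i = \<sigma> (rep k i + m) m"
proof -
  have "block_shift k i m - (rep k i + m) = (i - rep k i) - ((rep k i + m) - rep k (rep k i + m))"
    by (simp add: block_shift_def algebra_simps)
  then have "in_lat k (block_shift k i m - (rep k i + m))"
    using lat_diff[OF lat_rep lat_rep] by metis
  then show ?thesis
    unfolding twist_def by (rule skew_bichar_periodic[OF assms]) simp
qed

lemma block_shift_lattice_add: "in_lat k l \<Longrightarrow> block_shift k i (l + m) = block_shift k i m"
  using rep_eq_if_lat[of k "rep k i + (l + m)" "rep k i + m"] by (simp add: block_shift_def)

lemma twist_lattice_add:
  assumes "skew_bichar k \<sigma>" "in_lat k l"
  shows "twist k \<sigma> (l + m) i = twist k \<sigma> m i"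
  unfolding twist_def block_shift_lattice_add[OF assms(2)]
  by (rule skew_bichar_periodic[OF assms(1)]) (simp_all add: assms(2))

lemma twist_tendsto:
  assumes "Xi_conv ks \<sigma>s k \<sigma>"
  shows "(\<lambda>n. twist (ks n) (\<sigma>s n) m i) \<longlonglongrightarrow> twist k \<sigma> m i"
proof -
  have "(\<lambda>n. \<sigma>s n (block_shift k i m) m) \<longlonglongrightarrow> twist k \<sigma> m i"
    using assms by (simp add: Xi_conv_def twist_def)
  moreover have "\<forall>\<^sub>F n in sequentially. \<sigma>s n (block_shift k i m) m = twist (ks n) (\<sigma>s n) m i"
    using block_shift_eventually_eq[of ks k i m] assms
    by (simp add: Xi_conv_def twist_def eventually_mono)
  ultimately show ?thesis by (rule Lim_transform_eventually)
qed

lemma pi_rep_rho_upsilon: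
  assumes k: "\<forall>j. k $ j \<ge> 2" and \<sigma>: "skew_bichar k \<sigma>" and f: "ell1 f" and y: "\<And>j. cmod (y j) \<le> B"
  shows "pi_rep k (rho k \<sigma> (upsilon k f)) y i = perm_combination f (twist k \<sigma>) (\<lambda>m i. block_shift k i m) y i"
proof -
  define L where "L = {l. in_lat k l}"
  define F where "F m = f m * (twist k \<sigma> m i * y (block_shift k i m))" for m
  have "F summable_on UNIV"
    unfolding F_def using f skew_bichar_unimodular[OF \<sigma>] y
    by (intro perm_combination_summable[where s = "twist k \<sigma>"]) (auto simp: ell1_def twist_def)
  then have Sigma_summable: "(\<lambda>(n, l). F (l + n)) summable_on I_set k \<times> L"
    using summable_on_reindex_bij_betw[OF bij_betw_I_set_times_lattice[OF k], of F]
    by (simp add: L_def case_prod_unfold)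
  have "pi_rep k (rho k \<sigma> (upsilon k f)) y i
      = (\<Sum>\<^sub>\<infinity>n\<in>I_set k. upsilon k f n * (twist k \<sigma> n i * y (block_shift k i n)))"
    by (simp add: pi_rep_def rho_def Uop_def twist_eq[OF \<sigma>] block_shift_def)
  also have "\<dots> = (\<Sum>\<^sub>\<infinity>n\<in>I_set k. \<Sum>\<^sub>\<infinity>l\<in>L. F (l + n))"
  proof (rule infsum_cong)
    fix n
    have "(\<Sum>\<^sub>\<infinity>l\<in>L. F (l + n)) = (\<Sum>\<^sub>\<infinity>l\<in>L. f (l + n) * (twist k \<sigma> n i * y (block_shift k i n)))"
      by (rule infsum_cong) (simp add: F_def L_def twist_lattice_add[OF \<sigma>] block_shift_lattice_add)
    then show "upsilon k f n * (twist k \<sigma> n i * y (block_shift k i n)) = (\<Sum>\<^sub>\<infinity>l\<in>L. F (l + n))"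
      by (simp add: upsilon_def L_def infsum_cmult_left')
  qed
  also have "\<dots> = (\<Sum>\<^sub>\<infinity>(n, l)\<in>I_set k \<times> L. F (l + n))"
    by (rule infsum_Sigma'_banach[OF Sigma_summable])
  also have "\<dots> = infsum F UNIV"
    using infsum_reindex_bij_betw[OF bij_betw_I_set_times_lattice[OF k], of F]
    by (simp add: L_def case_prod_unfold)
  finally show ?thesis
    by (simp add: perm_combination_def F_def[abs_def])
qed

lemma pi_rep_rho_upsilon_ell2:
  assumes "in_Xi k \<sigma>" "ell1 f" "ell2 y"
  shows "pi_rep k (rho k \<sigma> (upsilon k f)) y = perm_combination f (twist k \<sigma>) (\<lambda>m i. block_shift k i m) y"
  using pi_rep_rho_upsilon[of k \<sigma> f y "sqrt (sqnorm y)"] cmod_le_sqrt_sqnorm[of y] assms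
  by (auto simp: in_Xi_def ell2_def)

lemma pi_rep_rho_upsilon_add:
  assumes "in_Xi k \<sigma>" "ell1 f" "ell2 u" "ell2 z"
  shows "pi_rep k (rho k \<sigma> (upsilon k f)) (\<lambda>i. u i + z i)
    = (\<lambda>i. pi_rep k (rho k \<sigma> (upsilon k f)) u i + pi_rep k (rho k \<sigma> (upsilon k f)) z i)"
proof -
  have "perm_combination f (twist k \<sigma>) (\<lambda>m i. block_shift k i m) (\<lambda>i. u i + z i) i
      = perm_combination f (twist k \<sigma>) (\<lambda>m i. block_shift k i m) u i
      + perm_combination f (twist k \<sigma>) (\<lambda>m i. block_shift k i m) z i" for i
    using assms twist_unimodular[OF assms(1)]
    by (intro perm_combination_add[where B = "sqrt (sqnorm u)" and B' = "sqrt (sqnorm z)"])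
       (simp_all add: ell1_def ell2_def cmod_le_sqrt_sqnorm)
  then show ?thesis
    using assms by (simp add: pi_rep_rho_upsilon_ell2 ell2_add fun_eq_iff)
qed

lemma sqnorm_pi_rep_diff_le:
  assumes "in_Xi k' \<sigma>'" "in_Xi k \<sigma>" "ell1 f" "ell2 y"
  defines "D \<equiv> \<lambda>i. pi_rep k' (rho k' \<sigma>' (upsilon k' f)) y i - pi_rep k (rho k \<sigma> (upsilon k f)) y i"
  shows "ell2 D" and "sqnorm D \<le> 4 * (\<Sum>\<^sub>\<infinity>m. cmod (f m))\<^sup>2 * sqnorm y"
  using sqnorm_perm_combination_diff_le(1,3)[where s' = "twist k' \<sigma>'" and s = "twist k \<sigma>"
      and t' = "\<lambda>m i. block_shift k' i m" and t = "\<lambda>m i. block_shift k i m" and y = y,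
      OF _ twist_unimodular[OF assms(1)] twist_unimodular[OF assms(2)] bij_block_shift bij_block_shift] assms
  by (simp_all add: D_def pi_rep_rho_upsilon_ell2 ell1_def ell2_def)

lemma pi_rep_strong_tendsto:
  assumes "in_Xi k \<sigma>" "\<And>n. in_Xi (ks n) (\<sigma>s n)" "Xi_conv ks \<sigma>s k \<sigma>" "ell1 f" "ell2 y"
  shows "(\<lambda>n. sqnorm (\<lambda>i. pi_rep (ks n) (rho (ks n) (\<sigma>s n) (upsilon (ks n) f)) y i
    - pi_rep k (rho k \<sigma> (upsilon k f)) y i)) \<longlonglongrightarrow> 0"
proof -
  have "\<forall>\<^sub>F n in sequentially. block_shift (ks n) i m = block_shift k i m" for m i
    using assms(3) by (simp add: Xi_conv_def block_shift_eventually_eq)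
  from perm_combination_strong_tendsto[where ss = "\<lambda>n. twist (ks n) (\<sigma>s n)" and s = "twist k \<sigma>"
      and ts = "\<lambda>n m i. block_shift (ks n) i m" and t = "\<lambda>m i. block_shift k i m" and y = y,
      OF _ twist_unimodular[OF assms(2)] twist_unimodular[OF assms(1)] bij_block_shift bij_block_shift
      this twist_tendsto[OF assms(3)]]
  show ?thesis
    using assms by (simp add: pi_rep_rho_upsilon_ell2 ell1_def ell2_def)
qed

theorem mainTheorem6:
  fixes k :: "enat ^ 'd" and \<sigma> :: "int ^ 'd \<Rightarrow> int ^ 'd \<Rightarrow> complex"
    and T :: "(int ^ 'd \<Rightarrow> complex) \<Rightarrow> (int ^ 'd \<Rightarrow> complex)"
    and ks :: "nat \<Rightarrow> enat ^ 'd" and \<sigma>s :: "nat \<Rightarrow> int ^ 'd \<Rightarrow> int ^ 'd \<Rightarrow> complex"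
    and f :: "int ^ 'd \<Rightarrow> complex"
  assumes "CARD('d) \<ge> 2"
    and "in_Xi k \<sigma>"
    and "compact_op T"
    and "\<forall>n. in_Xi (ks n) (\<sigma>s n)"
    and "Xi_conv ks \<sigma>s k \<sigma>"
    and "ell1 f"
  shows "(\<lambda>n. opnorm (\<lambda>x i. pi_rep (ks n) (rho (ks n) (\<sigma>s n) (upsilon (ks n) f)) (T x) i
                         - pi_rep k (rho k \<sigma> (upsilon k f)) (T x) i)) \<longlonglongrightarrow> 0"
proof -
  define E where "E n y i = pi_rep (ks n) (rho (ks n) (\<sigma>s n) (upsilon (ks n) f)) y i
    - pi_rep k (rho k \<sigma> (upsilon k f)) y i" for n y i
  have "(\<lambda>n. opnorm (\<lambda>x. E n (T x))) \<longlonglongrightarrow> 0"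
  proof (rule opnorm_compose_compact_tendsto_zero[OF \<open>compact_op T\<close>])
    show "0 \<le> 4 * (\<Sum>\<^sub>\<infinity>m. cmod (f m))\<^sup>2" by simp
    show "E n (\<lambda>i. u i + z i) = (\<lambda>i. E n u i + E n z i)" if "ell2 u" "ell2 z" for n u z
      using that assms(2,4,6) by (simp add: E_def[abs_def] pi_rep_rho_upsilon_add algebra_simps)
    show "ell2 (E n y) \<and> sqnorm (E n y) \<le> 4 * (\<Sum>\<^sub>\<infinity>m. cmod (f m))\<^sup>2 * sqnorm y" if "ell2 y" for n y
      using sqnorm_pi_rep_diff_le[OF _ assms(2,6) that] assms(4) by (simp add: E_def[abs_def])
    show "(\<lambda>n. sqnorm (E n y)) \<longlonglongrightarrow> 0" if "ell2 y" for y
      using pi_rep_strong_tendsto[OF assms(2) _ assms(5,6) that] assms(4) by (simp add: E_def[abs_def])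
  qed
  then show ?thesis by (simp add: E_def[abs_def])
qed

end
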